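(* Let $k$ be a field, $(C,\Delta)$ a coassociative coalgebra over $k$, $(L,\phi)$ a Lie algebra, and $B$ a Lie module over $L$ via $\psi:L\otimes B\to B$, i.e. $\psi(\phi(x_1,x_2),b)=\psi(x_1,\psi(x_2,b))-\psi(x_2,\psi(x_1,b))$. Let $\Phi(f\otimes g)(c)=\sum\phi(f(c_{(1)}),g(c_{(2)}))$ and $\Psi:Hom(C,L)\otimes Hom(C,B)\to Hom(C,B)$, $\Psi(g\otimes\beta)(c)=\sum\psi(g(c_{(1)}),\beta(c_{(2)}))$. Then $Hom(C,B)$ is a module over the TD Lie algebra $(Hom(C,L),\Phi)$, i.e. $$\Psi\circ(\Phi\otimes1)=\Psi\circ(1\otimes\Psi)-(\Psi\circ(1\otimes\Psi))^{\tau}\circ\tau,\quad\tau=(1\,2)\in S_3;$$ explicitly, for all $f,g\in Hom(C,L)$, $\beta\in Hom(C,B)$, $c\in C$, $$\sum\psi(\phi(f(c_{(1)}),g(c_{(2)})),\beta(c_{(3)}))=\sum\Big(\psi(f(c_{(1)}),\psi(g(c_{(2)}),\beta(c_{(3)})))-\psi(g(c_{(2)}),\psi(f(c_{(1)}),\beta(c_{(3)})))\Big).$$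
   Context: Sweedler notation $\Delta(c)=\sum c_{(1)}\otimes c_{(2)}$, $((\Delta\otimes1)\circ\Delta)(c)=\sum c_{(1)}\otimes c_{(2)}\otimes c_{(3)}$. $\tau$ acts on $Hom(C,L)\otimes Hom(C,L)\otimes Hom(C,B)$ and on $C^{\otimes3}$ by swapping the first two factors; $(\Psi\circ(1\otimes\Psi))^\tau(g_1\otimes g_2\otimes\beta)=\psi\circ(1\otimes\psi)\circ(g_1\otimes g_2\otimes\beta)\circ\tau\circ\Delta^{(2)}$ with $\Delta^{(2)}=(\Delta\otimes1)\circ\Delta$. *)

theory Defs
  imports Main "HOL.Vector_Spaces"
begin

text \<open>An element of C \<otimes> C is represented by a finite formal sum of pure tensors,
i.e. a list of pairs; two such representations denote the same tensor iff
they agree under every bilinear form C \<times> C \<rightarrow> k (valid over a field).\<close>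

definition bilinear_map ::
  "('k::field \<Rightarrow> 'a::ab_group_add \<Rightarrow> 'a) \<Rightarrow> ('k \<Rightarrow> 'b::ab_group_add \<Rightarrow> 'b)
   \<Rightarrow> ('k \<Rightarrow> 'c::ab_group_add \<Rightarrow> 'c) \<Rightarrow> ('a \<Rightarrow> 'b \<Rightarrow> 'c) \<Rightarrow> bool" where
  "bilinear_map sA sB sC h \<longleftrightarrow>
     (\<forall>x. Vector_Spaces.linear sB sC (h x)) \<and> (\<forall>y. Vector_Spaces.linear sA sC (\<lambda>x. h x y))"

definition trilinear_form ::
  "('k::field \<Rightarrow> 'c::ab_group_add \<Rightarrow> 'c) \<Rightarrow> ('c \<Rightarrow> 'c \<Rightarrow> 'c \<Rightarrow> 'k) \<Rightarrow> bool" where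
  "trilinear_form sC t \<longleftrightarrow>
     (\<forall>x. bilinear_map sC sC (*) (t x)) \<and> (\<forall>y z. Vector_Spaces.linear sC (*) (\<lambda>x. t x y z))"

definition tensor2_eq ::
  "('k::field \<Rightarrow> 'c::ab_group_add \<Rightarrow> 'c) \<Rightarrow> ('c \<times> 'c) list \<Rightarrow> ('c \<times> 'c) list \<Rightarrow> bool" where
  "tensor2_eq sC xs ys \<longleftrightarrow>
     (\<forall>h. bilinear_map sC sC (*) h \<longrightarrow>
          (\<Sum>(a,b)\<leftarrow>xs. h a b) = (\<Sum>(a,b)\<leftarrow>ys. h a b))"

text \<open>A coassociative coalgebra (C, \<Delta>) over k: \<Delta> c is (a representation of)
\<Sum> c(1) \<otimes> c(2); \<Delta> is linear and (\<Delta> \<otimes> 1) \<circ> \<Delta> = (1 \<otimes> \<Delta>) \<circ> \<Delta> as maps C \<rightarrow> C\<otimes>C\<otimes>C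
(tested against all trilinear forms).\<close>
definition coassoc_coalgebra ::
  "('k::field \<Rightarrow> 'c::ab_group_add \<Rightarrow> 'c) \<Rightarrow> ('c \<Rightarrow> ('c \<times> 'c) list) \<Rightarrow> bool" where
  "coassoc_coalgebra sC Delta \<longleftrightarrow>
     vector_space sC \<and>
     (\<forall>x y. tensor2_eq sC (Delta (x + y)) (Delta x @ Delta y)) \<and>
     (\<forall>a x. tensor2_eq sC (Delta (sC a x)) (map (\<lambda>(u,v). (sC a u, v)) (Delta x))) \<and>
     (\<forall>t c. trilinear_form sC t \<longrightarrow>
        (\<Sum>(u,v)\<leftarrow>Delta c. \<Sum>(a,b)\<leftarrow>Delta u. t a b v) =
        (\<Sum>(u,v)\<leftarrow>Delta c. \<Sum>(a,b)\<leftarrow>Delta v. t u a b))"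

definition lie_algebra ::
  "('k::field \<Rightarrow> 'l::ab_group_add \<Rightarrow> 'l) \<Rightarrow> ('l \<Rightarrow> 'l \<Rightarrow> 'l) \<Rightarrow> bool" where
  "lie_algebra sL phi \<longleftrightarrow>
     vector_space sL \<and> bilinear_map sL sL sL phi \<and>
     (\<forall>x. phi x x = 0) \<and>
     (\<forall>x y z. phi x (phi y z) + phi y (phi z x) + phi z (phi x y) = 0)"

definition lie_module ::
  "('k::field \<Rightarrow> 'l::ab_group_add \<Rightarrow> 'l) \<Rightarrow> ('l \<Rightarrow> 'l \<Rightarrow> 'l)
   \<Rightarrow> ('k \<Rightarrow> 'b::ab_group_add \<Rightarrow> 'b) \<Rightarrow> ('l \<Rightarrow> 'b \<Rightarrow> 'b) \<Rightarrow> bool" where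
  "lie_module sL phi sB psi \<longleftrightarrow>
     vector_space sB \<and> bilinear_map sL sB sB psi \<and>
     (\<forall>x1 x2 b. psi (phi x1 x2) b = psi x1 (psi x2 b) - psi x2 (psi x1 b))"

end

theory Submission
  imports Defs
begin

lemma lie_module_action_bracket:
  assumes "lie_module sL phi sB psi"
  shows "psi (phi x y) b = psi x (psi y b) - psi y (psi x b)"
  using assms unfolding lie_module_def by blast

text \<open>In the explicit Sweedler form both sides are indexed by the same terms of
  the iterated coproduct, so the module axiom for \<open>psi\<close> applies summand by summand.\<close>

theorem proposition5:
  fixes sC :: "'k::field \<Rightarrow> 'c::ab_group_add \<Rightarrow> 'c"
    and sL :: "'k \<Rightarrow> 'l::ab_group_add \<Rightarrow> 'l"
    and sB :: "'k \<Rightarrow> 'b::ab_group_add \<Rightarrow> 'b"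
    and Delta :: "'c \<Rightarrow> ('c \<times> 'c) list"
    and phi :: "'l \<Rightarrow> 'l \<Rightarrow> 'l"
    and psi :: "'l \<Rightarrow> 'b \<Rightarrow> 'b"
    and f g :: "'c \<Rightarrow> 'l" and beta :: "'c \<Rightarrow> 'b" and c :: 'c
  assumes "coassoc_coalgebra sC Delta"
    and "lie_algebra sL phi"
    and "lie_module sL phi sB psi"
    and "Vector_Spaces.linear sC sL f"
    and "Vector_Spaces.linear sC sL g"
    and "Vector_Spaces.linear sC sB beta"
  shows "(\<Sum>(u,c3)\<leftarrow>Delta c. \<Sum>(c1,c2)\<leftarrow>Delta u. psi (phi (f c1) (g c2)) (beta c3)) =
         (\<Sum>(u,c3)\<leftarrow>Delta c. \<Sum>(c1,c2)\<leftarrow>Delta u.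
            psi (f c1) (psi (g c2) (beta c3)) - psi (g c2) (psi (f c1) (beta c3)))"
  by (simp add: lie_module_action_bracket[OF assms(3)])

end
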